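(* Let $k,n$ be integers with $n>2$ and $k\geq 4$. If $c$ is an exact $k$-coloring of $\mathcal{B}_n$ with no rainbow induced copy of $\mathcal{B}_2$, then $k\leq \binom{n}{\lfloor n/2\rfloor}+\binom{n-1}{\lfloor (n-1)/2\rfloor}+\binom{n-2}{\lfloor (n-2)/2\rfloor}+1$.
   Context: $\mathcal{B}_n$ is the Boolean lattice of subsets of $[n]$ under inclusion. An exact $k$-coloring is a surjective map $c:\mathcal{B}_n\to[k]$. A rainbow induced copy of $\mathcal{B}_2$ is four sets $W_1\subsetneq W_2,W_3\subsetneq W_4$ with $W_2,W_3$ incomparable and pairwise distinct colors. *)

theory Defs
  imports Main
begin

text \<open>The Boolean lattice B_n is modelled as Pow {0..<n} (subsets of an n-element ground set).\<close>

definition exact_coloring :: "nat \<Rightarrow> nat \<Rightarrow> (nat set \<Rightarrow> nat) \<Rightarrow> bool" where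
  "exact_coloring n k c \<longleftrightarrow> c ` Pow {0..<n} = {1..k}"

definition rainbow_B2 :: "nat \<Rightarrow> (nat set \<Rightarrow> nat) \<Rightarrow> nat set \<Rightarrow> nat set \<Rightarrow> nat set \<Rightarrow> nat set \<Rightarrow> bool" where
  "rainbow_B2 n c W1 W2 W3 W4 \<longleftrightarrow>
     W1 \<in> Pow {0..<n} \<and> W2 \<in> Pow {0..<n} \<and> W3 \<in> Pow {0..<n} \<and> W4 \<in> Pow {0..<n} \<and>
     W1 \<subset> W2 \<and> W1 \<subset> W3 \<and> W2 \<subset> W4 \<and> W3 \<subset> W4 \<and>
     \<not> W2 \<subseteq> W3 \<and> \<not> W3 \<subseteq> W2 \<and>
     c W1 \<noteq> c W2 \<and> c W1 \<noteq> c W3 \<and> c W1 \<noteq> c W4 \<and>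
     c W2 \<noteq> c W3 \<and> c W2 \<noteq> c W4 \<and> c W3 \<noteq> c W4"

definition has_rainbow_B2 :: "nat \<Rightarrow> (nat set \<Rightarrow> nat) \<Rightarrow> bool" where
  "has_rainbow_B2 n c \<longleftrightarrow> (\<exists>W1 W2 W3 W4. rainbow_B2 n c W1 W2 W3 W4)"

end

theory Submission
  imports Defs "HOL-Combinatorics.Multiset_Permutations"
begin

text \<open>
  Let \<open>R\<close> consist of one set of each colour other than the colours of \<open>{}\<close> and \<open>[n]\<close>.
  Avoiding a rainbow \<open>B\<^sub>2\<close> forces a rigid structure on \<open>R\<close>: two members with a common
  subset or superset in \<open>R\<close> are comparable, so comparability is an equivalence relation
  on \<open>R\<close> whose classes are chains; and no chain in \<open>R\<close> has four members, because for
  \<open>X\<^sub>0 \<subset> X\<^sub>1 \<subset> X\<^sub>2 \<subset> X\<^sub>3\<close> the sets \<open>X\<^sub>0 \<union> (X\<^sub>2 - X\<^sub>1)\<close> and \<open>X\<^sub>1 \<union> (X\<^sub>3 - X\<^sub>2)\<close> are forced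
  to take the colours of \<open>X\<^sub>1\<close> and \<open>X\<^sub>2\<close>, and then span a rainbow \<open>B\<^sub>2\<close> with \<open>X\<^sub>0\<close> and \<open>X\<^sub>3\<close>.

  If \<open>{}\<close> and \<open>[n]\<close> have different colours, \<open>R\<close> is itself a chain and \<open>k \<le> 5\<close>. Otherwise
  \<open>|R| = k - 1\<close>, and we count permutations of \<open>[n]\<close>, i.e. maximal chains of \<open>B\<^sub>n\<close>, as in
  the LYM inequality: the permutations having a prefix set in a given class are disjoint
  for different classes, and by inclusion-exclusion a class of \<open>m \<le> 3\<close> sets is met by at
  least \<open>11m/18 \<cdot> \<lfloor>n/2\<rfloor>! \<lceil>n/2\<rceil>!\<close> of them. Hence \<open>11 (k - 1) \<le> 18 (n choose \<lfloor>n/2\<rfloor>)\<close>, which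
  is below the claimed bound since \<open>18/11 < 1 + 1/2 + 1/4\<close> and each central binomial
  coefficient is at most twice the next one.
\<close>

lemma finite_chain_sorted_list:
  assumes "finite K" and "chain\<^sub>\<subseteq> K" and "\<forall>A\<in>K. finite A"
  shows "\<exists>xs. set xs = K \<and> sorted_wrt (\<subset>) xs"
  using assms
proof (induction K rule: finite_psubset_induct)
  case (psubset K)
  show ?case
  proof (cases "K = {}")
    case False
    have "Max (card ` K) \<in> card ` K"
      using psubset.hyps False by simp
    then obtain M where M: "M \<in> K" "card M = Max (card ` K)"
      by auto
    have below_M: "T \<subseteq> M" if "T \<in> K" for T
    proof (rule ccontr)
      assume "\<not> T \<subseteq> M"
      then have "M \<subset> T"
        using psubset.prems(1) that M(1) by (auto simp: chain_subset_def)
      then have "card M < card T"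
        using psubset.prems(2) that psubset_card_mono by blast
      moreover have "card T \<le> Max (card ` K)"
        using psubset.hyps that by simp
      ultimately show False
        using M(2) by simp
    qed
    obtain xs where xs: "set xs = K - {M}" "sorted_wrt (\<subset>) xs"
      using psubset.IH[of "K - {M}"] psubset.prems M(1) by (auto simp: chain_subset_def)
    then have "set (xs @ [M]) = K \<and> sorted_wrt (\<subset>) (xs @ [M])"
      using M(1) below_M by (auto simp: sorted_wrt_append)
    then show ?thesis by blast
  qed simp
qed

lemma sorted_wrt_psubset_distinct: "sorted_wrt (\<subset>) xs \<Longrightarrow> distinct xs"
  by (induction xs) auto

lemma card_Union_le_by_disjoint_images:
  fixes a b :: nat and P :: "'a set set" and F :: "'a set \<Rightarrow> 'b set"
  assumes "finite (\<Union>P)" and "finite \<Omega>" and "pairwise disjnt P" and "disjoint_family_on F P"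
    and "\<forall>I\<in>P. F I \<subseteq> \<Omega>" and "\<forall>I\<in>P. a * card I \<le> b * card (F I)"
  shows "a * card (\<Union>P) \<le> b * card \<Omega>"
proof -
  have "finite P" and finite_I: "\<forall>I\<in>P. finite I"
    using assms(1) finite_UnionD by (auto intro: finite_subset)
  have finite_F: "\<forall>I\<in>P. finite (F I)"
    using assms(2,5) finite_subset by blast
  have "a * card (\<Union>P) = (\<Sum>I\<in>P. a * card I)"
    using card_Union_disjoint[OF assms(3)] finite_I by (simp add: sum_distrib_left)
  also have "\<dots> \<le> (\<Sum>I\<in>P. b * card (F I))"
    using assms(6) by (simp add: sum_mono)
  also have "\<dots> = b * card (\<Union>I\<in>P. F I)"
    using card_UN_disjoint[OF \<open>finite P\<close>, of F] finite_F assms(4)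
    by (simp add: sum_distrib_left disjoint_family_on_def)
  also have "\<dots> \<le> b * card \<Omega>"
    using assms(2,5) by (intro mult_le_mono2 card_mono) auto
  finally show ?thesis .
qed

lemma self_le_binomial: "0 < j \<Longrightarrow> j < m \<Longrightarrow> m \<le> m choose j"
proof (induction m arbitrary: j)
  case 0
  then show ?case by simp
next
  case (Suc m)
  then obtain i where j: "j = Suc i" by (cases j) auto
  show ?case
  proof (cases "i = 0")
    case True
    then show ?thesis using j by simp
  next
    case False
    then have "m \<le> m choose i" and "0 < m choose Suc i"
      using Suc j by simp_all
    moreover have "Suc m choose j = (m choose i) + (m choose Suc i)"
      using j by simp
    ultimately show ?thesis by linarith
  qed
qed

lemma central_binomial_le_twice_pred:
  "m choose (m div 2) \<le> 2 * ((m - 1) choose ((m - 1) div 2))"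
proof (cases "m div 2 = 0")
  case False
  then have "m choose (m div 2) = ((m - 1) choose (m div 2 - 1)) + ((m - 1) choose (m div 2))"
    using choose_reduce_nat[of m "m div 2"] by simp
  then show ?thesis
    using binomial_maximum[of "m - 1"] by (metis add_mono mult_2)
qed simp

definition central_fact_prod :: "nat \<Rightarrow> nat" where
  "central_fact_prod m = fact (m div 2) * fact (m - m div 2)"

lemma fact_eq_central_fact_prod_mult_binomial:
  "fact m = central_fact_prod m * (m choose (m div 2))"
  using binomial_fact_lemma[of "m div 2" m] by (simp add: central_fact_prod_def)

section \<open>Permutations with a prescribed prefix set\<close>

text \<open>A permutation of \<open>A\<close> stands for the maximal chain of its prefix sets;
  \<open>prefix_perms A S\<close> are the maximal chains through \<open>S\<close>.\<close>

definition prefix_perms :: "'a set \<Rightarrow> 'a set \<Rightarrow> 'a list set" where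
  "prefix_perms A S = {\<sigma> \<in> permutations_of_set A. set (take (card S) \<sigma>) = S}"

lemma finite_prefix_perms [simp]: "finite (prefix_perms A S)"
  by (simp add: prefix_perms_def)

lemma card_permutations_with_prefix_set:
  assumes "finite A" and "Y \<subseteq> A"
  shows "card {\<sigma> \<in> permutations_of_set A. set (take (card Y) \<sigma>) = Y \<and> Q (take (card Y) \<sigma>)}
         = card {\<tau> \<in> permutations_of_set Y. Q \<tau>} * fact (card A - card Y)"
proof -
  let ?L = "{\<tau> \<in> permutations_of_set Y. Q \<tau>}" and ?M = "permutations_of_set (A - Y)"
  let ?P = "{\<sigma> \<in> permutations_of_set A. set (take (card Y) \<sigma>) = Y \<and> Q (take (card Y) \<sigma>)}"
  have "finite Y" using assms finite_subset by blast
  have length_L: "length \<tau> = card Y" if "\<tau> \<in> ?L" for \<tau>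
    using that by (auto simp: permutations_of_set_def distinct_card[symmetric])
  have "?P = (\<lambda>(\<tau>, \<rho>). \<tau> @ \<rho>) ` (?L \<times> ?M)"
  proof (intro equalityI subsetI)
    fix \<sigma> assume \<sigma>: "\<sigma> \<in> ?P"
    let ?\<tau> = "take (card Y) \<sigma>" and ?\<rho> = "drop (card Y) \<sigma>"
    have "distinct \<sigma>" "set \<sigma> = A" using \<sigma> by (auto simp: permutations_of_set_def)
    moreover have "set ?\<tau> \<inter> set ?\<rho> = {}"
      using set_take_disj_set_drop_if_distinct[OF \<open>distinct \<sigma>\<close>, of "card Y" "card Y"] by simp
    moreover have "set ?\<tau> \<union> set ?\<rho> = set \<sigma>"
      by (metis append_take_drop_id set_append)
    ultimately have "set ?\<rho> = A - Y" using \<sigma> by blast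
    with \<sigma> \<open>distinct \<sigma>\<close> have "(?\<tau>, ?\<rho>) \<in> ?L \<times> ?M"
      by (auto simp: permutations_of_set_def)
    then show "\<sigma> \<in> (\<lambda>(\<tau>, \<rho>). \<tau> @ \<rho>) ` (?L \<times> ?M)"
      by (auto intro!: image_eqI[where x = "(?\<tau>, ?\<rho>)"])
  next
    fix \<sigma> assume "\<sigma> \<in> (\<lambda>(\<tau>, \<rho>). \<tau> @ \<rho>) ` (?L \<times> ?M)"
    then obtain \<tau> \<rho> where "\<sigma> = \<tau> @ \<rho>" "\<tau> \<in> ?L" "\<rho> \<in> ?M" by auto
    with length_L assms(2) show "\<sigma> \<in> ?P" by (auto simp: permutations_of_set_def)
  qed
  moreover have "inj_on (\<lambda>(\<tau>, \<rho>). \<tau> @ \<rho>) (?L \<times> ?M)"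
    using length_L by (auto intro!: inj_onI)
  ultimately have "card ?P = card ?L * card ?M"
    by (simp add: card_image card_cartesian_product)
  then show ?thesis
    using assms \<open>finite Y\<close> by (simp add: card_Diff_subset)
qed

lemma card_prefix_perms:
  assumes "finite A" and "S \<subseteq> A"
  shows "card (prefix_perms A S) = fact (card S) * fact (card A - card S)"
proof -
  have "finite S"
    using assms finite_subset by blast
  then show ?thesis
    using card_permutations_with_prefix_set[OF assms, of "\<lambda>_. True"] by (simp add: prefix_perms_def)
qed

lemma card_prefix_perms_Int:
  assumes "finite A" and "X \<subseteq> Y" and "Y \<subseteq> A"
  shows "card (prefix_perms A X \<inter> prefix_perms A Y)
         = fact (card X) * fact (card Y - card X) * fact (card A - card Y)"
proof -
  have "card X \<le> card Y"
    using assms finite_subset card_mono by blast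
  then have "prefix_perms A X \<inter> prefix_perms A Y
      = {\<sigma> \<in> permutations_of_set A. set (take (card Y) \<sigma>) = Y \<and> set (take (card X) (take (card Y) \<sigma>)) = X}"
    by (auto simp: prefix_perms_def min_absorb1)
  then have "card (prefix_perms A X \<inter> prefix_perms A Y) = card (prefix_perms Y X) * fact (card A - card Y)"
    using card_permutations_with_prefix_set[OF assms(1,3), of "\<lambda>\<tau>. set (take (card X) \<tau>) = X"]
    by (simp add: prefix_perms_def)
  then show ?thesis
    using card_prefix_perms[OF _ assms(2)] assms finite_subset by auto
qed

lemma card_prefix_perms_Int_mult_binomial_upper:
  assumes "finite A" and "X \<subseteq> Y" and "Y \<subseteq> A"
  shows "card (prefix_perms A X \<inter> prefix_perms A Y) * (card Y choose card X) = card (prefix_perms A Y)"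
proof -
  have "card X \<le> card Y"
    using assms finite_subset card_mono by blast
  then show ?thesis
    using card_prefix_perms_Int[OF assms] card_prefix_perms[OF assms(1)] assms
      binomial_fact_lemma[of "card X" "card Y"]
    by (simp add: ac_simps)
qed

lemma card_prefix_perms_Int_mult_binomial_lower:
  assumes "finite A" and "X \<subseteq> Y" and "Y \<subseteq> A"
  shows "card (prefix_perms A X \<inter> prefix_perms A Y) * ((card A - card X) choose (card Y - card X))
         = card (prefix_perms A X)"
proof -
  have "card X \<le> card Y" "card Y \<le> card A"
    using assms finite_subset card_mono by blast+
  then have "fact (card Y - card X) * fact (card A - card Y) * ((card A - card X) choose (card Y - card X))
      = fact (card A - card X)"
    using binomial_fact_lemma[of "card Y - card X" "card A - card X"] by simp
  then show ?thesis
    using card_prefix_perms_Int[OF assms] card_prefix_perms[OF assms(1)] assms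
    by (simp add: ac_simps)
qed

lemma card_prefix_perms_Int_le_upper:
  assumes "finite A" and "X \<noteq> {}" and "X \<subset> Y" and "Y \<subseteq> A"
  shows "card Y * card (prefix_perms A X \<inter> prefix_perms A Y) \<le> card (prefix_perms A Y)"
proof -
  have "finite Y" using assms finite_subset by blast
  then have "0 < card X"
    using assms finite_subset by (auto simp: card_gt_0_iff)
  moreover have "card X < card Y"
    using \<open>finite Y\<close> assms(3) psubset_card_mono by blast
  ultimately have "card Y \<le> card Y choose card X"
    by (rule self_le_binomial)
  then show ?thesis
    using card_prefix_perms_Int_mult_binomial_upper[OF assms(1) _ assms(4)] assms(3)
    by (metis mult.commute mult_le_mono2 psubset_imp_subset)
qed

lemma card_prefix_perms_Int_le_lower:
  assumes "finite A" and "X \<subset> Y" and "Y \<subset> A"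
  shows "(card A - card X) * card (prefix_perms A X \<inter> prefix_perms A Y) \<le> card (prefix_perms A X)"
proof -
  have "card X < card Y" and "card Y < card A"
    using assms finite_subset psubset_card_mono by blast+
  then have "card A - card X \<le> (card A - card X) choose (card Y - card X)"
    by (intro self_le_binomial) simp_all
  then show ?thesis
    using card_prefix_perms_Int_mult_binomial_lower[OF assms(1)] assms(2,3)
    by (metis mult.commute mult_le_mono2 psubset_imp_subset)
qed

lemma prefix_perms_comparable:
  assumes "\<sigma> \<in> prefix_perms A S" and "\<sigma> \<in> prefix_perms A T"
  shows "S \<subseteq> T \<or> T \<subseteq> S"
proof (cases "card S \<le> card T")
  case True
  then show ?thesis
    using assms set_take_subset_set_take[OF True, of \<sigma>] by (auto simp: prefix_perms_def)
next
  case False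
  then have "card T \<le> card S" by simp
  then show ?thesis
    using assms set_take_subset_set_take[of "card T" "card S" \<sigma>] by (auto simp: prefix_perms_def)
qed

lemma central_fact_prod_le_card_prefix_perms:
  assumes "finite A" and "S \<subseteq> A"
  shows "central_fact_prod (card A) \<le> card (prefix_perms A S)"
proof -
  let ?n = "card A" and ?s = "card S"
  have "?s \<le> ?n"
    using assms card_mono by blast
  then have "central_fact_prod ?n * (?n choose (?n div 2)) = card (prefix_perms A S) * (?n choose ?s)"
    using binomial_fact_lemma[of ?s ?n] card_prefix_perms[OF assms]
    by (simp add: fact_eq_central_fact_prod_mult_binomial[symmetric])
  also have "\<dots> \<le> card (prefix_perms A S) * (?n choose (?n div 2))"
    by (simp add: binomial_maximum)
  finally show ?thesis
    by simp
qed

lemma card_Union_prefix_perms_pair: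
  assumes "finite A" and "X \<noteq> {}" and "X \<subset> Y" and "Y \<subseteq> A"
  shows "2 * card (prefix_perms A X) + card (prefix_perms A Y)
         \<le> 2 * card (prefix_perms A X \<union> prefix_perms A Y)"
proof -
  let ?P = "prefix_perms A"
  have "finite Y"
    using assms(1,4) by (rule finite_subset[rotated])
  then have "finite X"
    using assms(3) by (metis finite_subset psubset_imp_subset)
  then have "0 < card X"
    using assms(2) by (simp add: card_gt_0_iff)
  moreover have "card X < card Y"
    using \<open>finite Y\<close> assms(3) by (rule psubset_card_mono)
  ultimately have "2 \<le> card Y"
    by linarith
  then have "2 * card (?P X \<inter> ?P Y) \<le> card Y * card (?P X \<inter> ?P Y)"
    by (rule mult_le_mono1)
  also have "\<dots> \<le> card (?P Y)"
    using card_prefix_perms_Int_le_upper[OF assms] .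
  finally show ?thesis
    using card_Un_Int[of "?P X" "?P Y"] by simp
qed

lemma card_Union_prefix_perms_triple:
  assumes "finite A" and "Y \<noteq> {}" and "X \<subset> Y" and "Y \<subset> V" and "V \<subset> A"
  shows "2 * card (prefix_perms A X) + 6 * card (prefix_perms A Y) + 3 * card (prefix_perms A V)
         \<le> 6 * card (prefix_perms A X \<union> prefix_perms A Y \<union> prefix_perms A V)"
proof -
  let ?P = "prefix_perms A"
  have "finite V" and "finite Y"
    using assms(1,4,5) finite_subset by (meson less_imp_le)+
  then have "card X < card Y" and "card Y < card V" and "card V < card A"
    using assms(1,3-5) psubset_card_mono by blast+
  then have "3 \<le> card A - card X"
    by linarith
  have lower: "3 * card (?P X \<inter> ?P Z) \<le> card (?P X)" if "X \<subset> Z" and "Z \<subset> A" for Z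
  proof -
    have "3 * card (?P X \<inter> ?P Z) \<le> (card A - card X) * card (?P X \<inter> ?P Z)"
      using \<open>3 \<le> card A - card X\<close> by (rule mult_le_mono1)
    also have "\<dots> \<le> card (?P X)"
      by (rule card_prefix_perms_Int_le_lower[OF assms(1) that])
    finally show ?thesis .
  qed
  have "3 * card (?P X \<inter> ?P Y) \<le> card (?P X)" and "3 * card (?P X \<inter> ?P V) \<le> card (?P X)"
    using lower assms(3-5) by auto
  moreover have "card (?P X \<inter> (?P Y \<union> ?P V)) \<le> card (?P X \<inter> ?P Y) + card (?P X \<inter> ?P V)"
    by (metis Int_Un_distrib card_Un_le)
  moreover have "card (?P X \<union> (?P Y \<union> ?P V)) + card (?P X \<inter> (?P Y \<union> ?P V))
      = card (?P X) + card (?P Y \<union> ?P V)"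
    using card_Un_Int[of "?P X" "?P Y \<union> ?P V"] by simp
  moreover have "2 * card (?P Y) + card (?P V) \<le> 2 * card (?P Y \<union> ?P V)"
    using assms(5) by (intro card_Union_prefix_perms_pair[OF assms(1,2,4)]) auto
  ultimately show ?thesis
    by (simp add: Un_assoc)
qed

lemma card_Union_prefix_perms_short_chain:
  assumes "finite A" and "sorted_wrt (\<subset>) xs" and "length xs \<le> 3"
    and "\<forall>T\<in>set xs. T \<noteq> {} \<and> T \<subset> A"
  shows "11 * length xs * central_fact_prod (card A) \<le> 18 * card (\<Union>T\<in>set xs. prefix_perms A T)"
proof -
  let ?D = "central_fact_prod (card A)" and ?P = "prefix_perms A"
  have D_le: "?D \<le> card (?P T)" if "T \<in> set xs" for T
    using central_fact_prod_le_card_prefix_perms assms(1,4) that by blast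
  consider "xs = []" | X where "xs = [X]" | X Y where "xs = [X, Y]" | X Y V where "xs = [X, Y, V]"
    using assms(3) by (cases xs; cases "tl xs"; cases "tl (tl xs)") auto
  then show ?thesis
  proof cases
    case 1
    then show ?thesis by simp
  next
    case 2
    then show ?thesis using D_le by simp
  next
    case (3 X Y)
    then have "X \<noteq> {}" and "X \<subset> Y" and "Y \<subseteq> A"
      using assms(2,4) by auto
    then have "2 * card (?P X) + card (?P Y) \<le> 2 * card (?P X \<union> ?P Y)"
      by (rule card_Union_prefix_perms_pair[OF assms(1)])
    then show ?thesis
      using 3 D_le[of X] D_le[of Y] by simp
  next
    case (4 X Y V)
    then have "Y \<noteq> {}" and "X \<subset> Y" and "Y \<subset> V" and "V \<subset> A"
      using assms(2,4) by auto
    then have "2 * card (?P X) + 6 * card (?P Y) + 3 * card (?P V) \<le> 6 * card (?P X \<union> ?P Y \<union> ?P V)"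
      by (rule card_Union_prefix_perms_triple[OF assms(1)])
    then show ?thesis
      using 4 D_le[of X] D_le[of Y] D_le[of V] by (simp add: Un_assoc)
  qed
qed

section \<open>Colourings without a rainbow \<open>B\<^sub>2\<close>\<close>

lemma has_rainbow_B2I:
  assumes "W1 \<subset> W2" and "W1 \<subset> W3" and "W2 \<subset> W4" and "W3 \<subset> W4" and "W4 \<subseteq> {0..<n}"
    and "\<not> W2 \<subseteq> W3" and "\<not> W3 \<subseteq> W2" and "distinct [c W1, c W2, c W3, c W4]"
  shows "has_rainbow_B2 n c"
  using assms unfolding has_rainbow_B2_def rainbow_B2_def
  by (intro exI[of _ W1] exI[of _ W2] exI[of _ W3] exI[of _ W4]) auto

lemma exact_coloring_transversal:
  assumes "exact_coloring n k c" and "I \<subseteq> {1..k}"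
  obtains R where "R \<subseteq> Pow {0..<n}" and "bij_betw c R I"
proof
  let ?rep = "inv_into (Pow {0..<n}) c"
  have colours: "I \<subseteq> c ` Pow {0..<n}"
    using assms by (simp add: exact_coloring_def)
  then show "?rep ` I \<subseteq> Pow {0..<n}"
    by (meson image_subsetI inv_into_into subsetD)
  have rep_colour: "c (?rep i) = i" if "i \<in> I" for i
    using that colours by (auto intro: f_inv_into_f)
  have "c ` ?rep ` I = I"
    using rep_colour by (force simp: image_image)
  moreover have "inj_on c (?rep ` I)"
    using rep_colour by (auto intro!: inj_onI)
  ultimately show "bij_betw c (?rep ` I) I"
    by (simp add: bij_betw_def)
qed

locale rainbow_free_transversal =
  fixes n :: nat and c :: "nat set \<Rightarrow> nat" and R :: "nat set set"
  assumes no_rainbow: "\<not> has_rainbow_B2 n c"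
    and transversal_subsets: "R \<subseteq> Pow {0..<n}"
    and inj_colour: "inj_on c R"
    and bottom_colour: "c {} \<notin> c ` R"
    and top_colour: "c {0..<n} \<notin> c ` R"
begin

lemma member_nonempty: "S \<in> R \<Longrightarrow> S \<noteq> {}"
  using bottom_colour by blast

lemma member_proper: "S \<in> R \<Longrightarrow> S \<subset> {0..<n}"
  using transversal_subsets top_colour by blast

lemma transversal_finite: "finite R"
  using transversal_subsets finite_subset by blast

lemma colour_neq: "S \<in> R \<Longrightarrow> T \<in> R \<Longrightarrow> S \<noteq> T \<Longrightarrow> c S \<noteq> c T"
  using inj_colour by (auto dest: inj_onD)

lemma colour_neq_bottom: "S \<in> R \<Longrightarrow> c {} \<noteq> c S"
  using bottom_colour by (metis image_eqI)

lemma colour_neq_top: "S \<in> R \<Longrightarrow> c S \<noteq> c {0..<n}"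
  using top_colour by (metis image_eqI)

lemma comparable_if_common_subset:
  assumes "S \<in> R" and "T1 \<in> R" and "T2 \<in> R" and "S \<subset> T1" and "S \<subset> T2"
  shows "T1 \<subseteq> T2 \<or> T2 \<subseteq> T1"
proof (rule ccontr)
  assume incomparable: "\<not> (T1 \<subseteq> T2 \<or> T2 \<subseteq> T1)"
  have "has_rainbow_B2 n c"
  proof (rule has_rainbow_B2I[of S T1 T2 "{0..<n}"])
    show "T1 \<subset> {0..<n}" and "T2 \<subset> {0..<n}"
      using assms member_proper by blast+
    show "distinct [c S, c T1, c T2, c {0..<n}]"
      using assms incomparable colour_neq colour_neq_top by auto
  qed (use assms incomparable in auto)
  with no_rainbow show False ..
qed

lemma comparable_if_common_superset:
  assumes "S \<in> R" and "T1 \<in> R" and "T2 \<in> R" and "T1 \<subset> S" and "T2 \<subset> S"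
  shows "T1 \<subseteq> T2 \<or> T2 \<subseteq> T1"
proof (rule ccontr)
  assume incomparable: "\<not> (T1 \<subseteq> T2 \<or> T2 \<subseteq> T1)"
  have "has_rainbow_B2 n c"
  proof (rule has_rainbow_B2I[of "{}" T1 T2 S])
    show "{} \<subset> T1" and "{} \<subset> T2"
      using assms member_nonempty by blast+
    show "distinct [c {}, c T1, c T2, c S]"
      using assms incomparable colour_neq colour_neq_bottom by auto
  qed (use assms incomparable transversal_subsets in auto)
  with no_rainbow show False ..
qed

lemma comparable_trans:
  assumes "S \<in> R" and "T \<in> R" and "W \<in> R"
    and "S \<subseteq> T \<or> T \<subseteq> S" and "T \<subseteq> W \<or> W \<subseteq> T"
  shows "S \<subseteq> W \<or> W \<subseteq> S"
  using assms comparable_if_common_subset[of T S W] comparable_if_common_superset[of T S W]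
  by blast

lemma crossing_set_colour:
  assumes "X \<in> R" and "Y \<in> R" and "V \<in> R" and "X \<subset> Y" and "Y \<subset> V"
    and "X \<subseteq> Z" and "Z \<subseteq> V" and "\<not> Z \<subseteq> Y" and "\<not> Y \<subseteq> Z"
  shows "c Z = c Y"
proof (rule ccontr)
  assume "c Z \<noteq> c Y"
  have colours: "distinct [c X, c Y, c V]"
    using assms colour_neq by auto
  have "X \<subset> Z" and "Z \<subset> V" and "V \<subset> {0..<n}"
    using assms member_proper by blast+
  consider "c Z = c X" | "c Z = c V" | "c Z \<noteq> c X" "c Z \<noteq> c V"
    by blast
  then have "has_rainbow_B2 n c"
  proof cases
    case 1
    show ?thesis
      by (rule has_rainbow_B2I[of "{}" Y Z V])
        (use assms \<open>Z \<subset> V\<close> \<open>V \<subset> {0..<n}\<close> member_nonempty colours colour_neq_bottom 1 in auto)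
  next
    case 2
    show ?thesis
      by (rule has_rainbow_B2I[of X Y Z "{0..<n}"])
        (use assms \<open>X \<subset> Z\<close> \<open>Z \<subset> V\<close> \<open>V \<subset> {0..<n}\<close> colours colour_neq_top 2 in auto)
  next
    case 3
    show ?thesis
      by (rule has_rainbow_B2I[of X Y Z V])
        (use assms \<open>X \<subset> Z\<close> \<open>Z \<subset> V\<close> \<open>V \<subset> {0..<n}\<close> colours \<open>c Z \<noteq> c Y\<close> 3 in auto)
  qed
  with no_rainbow show False ..
qed

lemma sorted_chain_length_le_3:
  assumes "sorted_wrt (\<subset>) xs" and "set xs \<subseteq> R"
  shows "length xs \<le> 3"
proof (rule ccontr)
  assume "\<not> length xs \<le> 3"
  then obtain X0 X1 X2 X3 ys where xs: "xs = X0 # X1 # X2 # X3 # ys"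
    by (metis Suc_le_length_iff numeral_3_eq_3 not_less_eq_eq)
  then have R: "X0 \<in> R" "X1 \<in> R" "X2 \<in> R" "X3 \<in> R" and chain: "X0 \<subset> X1" "X1 \<subset> X2" "X2 \<subset> X3"
    using assms by auto
  define Z where "Z = X0 \<union> (X2 - X1)"
  define Z' where "Z' = X1 \<union> (X3 - X2)"
  have "c Z = c X1"
    by (rule crossing_set_colour[OF R(1-3) chain(1,2)]) (use chain in \<open>auto simp: Z_def\<close>)
  moreover have "c Z' = c X2"
    by (rule crossing_set_colour[OF R(2-4) chain(2,3)]) (use chain in \<open>auto simp: Z'_def\<close>)
  moreover have "distinct [c X0, c X1, c X2, c X3]"
    using R chain colour_neq by auto
  ultimately have "has_rainbow_B2 n c"
    using chain member_proper[OF R(4)]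
    by (intro has_rainbow_B2I[of X0 Z Z' X3]) (auto simp: Z_def Z'_def)
  with no_rainbow show False ..
qed

definition component :: "nat set \<Rightarrow> nat set set" where
  "component S = {T \<in> R. S \<subseteq> T \<or> T \<subseteq> S}"

lemma component_eq:
  assumes "S \<in> R" and "T \<in> component S"
  shows "component T = component S"
  using assms comparable_trans unfolding component_def by blast

lemma chain_component: "S \<in> R \<Longrightarrow> chain\<^sub>\<subseteq> (component S)"
  using comparable_trans unfolding component_def chain_subset_def by blast

lemma chain_sorted_list:
  assumes "K \<subseteq> R" and "chain\<^sub>\<subseteq> K"
  obtains xs where "set xs = K" and "sorted_wrt (\<subset>) xs" and "length xs = card K" and "length xs \<le> 3"
proof -
  have "finite K"
    using assms(1) transversal_finite finite_subset by blast
  moreover have "\<forall>A\<in>K. finite A"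
    using assms(1) transversal_subsets by (auto intro: finite_subset)
  ultimately obtain xs where xs: "set xs = K" "sorted_wrt (\<subset>) xs"
    using finite_chain_sorted_list assms(2) by blast
  moreover have "length xs = card K"
    using xs sorted_wrt_psubset_distinct distinct_card by metis
  moreover have "length xs \<le> 3"
    using xs assms(1) sorted_chain_length_le_3 by blast
  ultimately show ?thesis
    using that by blast
qed

lemma card_le_3_if_ends_differ:
  assumes "c {} \<noteq> c {0..<n}"
  shows "card R \<le> 3"
proof -
  have "chain\<^sub>\<subseteq> R"
    unfolding chain_subset_def
  proof (intro ballI)
    fix S T assume S: "S \<in> R" and T: "T \<in> R"
    show "S \<subseteq> T \<or> T \<subseteq> S"
    proof (rule ccontr)
      assume incomparable: "\<not> (S \<subseteq> T \<or> T \<subseteq> S)"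
      have "has_rainbow_B2 n c"
      proof (rule has_rainbow_B2I[of "{}" S T "{0..<n}"])
        show "{} \<subset> S" and "{} \<subset> T"
          using S T member_nonempty by blast+
        show "S \<subset> {0..<n}" and "T \<subset> {0..<n}"
          using S T member_proper by blast+
        show "distinct [c {}, c S, c T, c {0..<n}]"
          using S T incomparable assms colour_neq colour_neq_bottom colour_neq_top by auto
      qed (use incomparable in auto)
      with no_rainbow show False ..
    qed
  qed
  then obtain xs where "set xs = R" "sorted_wrt (\<subset>) xs" "length xs = card R" "length xs \<le> 3"
    by (rule chain_sorted_list[OF order_refl])
  then show ?thesis
    by simp
qed

lemma card_component_le:
  assumes "S \<in> R"
  shows "11 * card (component S) * central_fact_prod n
         \<le> 18 * card (\<Union>T\<in>component S. prefix_perms {0..<n} T)"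
proof -
  have "component S \<subseteq> R"
    by (auto simp: component_def)
  then obtain xs where xs: "set xs = component S" "sorted_wrt (\<subset>) xs"
      "length xs = card (component S)" "length xs \<le> 3"
    using chain_component[OF assms] by (rule chain_sorted_list)
  moreover have "\<forall>T\<in>set xs. T \<noteq> {} \<and> T \<subset> {0..<n}"
    using xs(1) \<open>component S \<subseteq> R\<close> member_nonempty member_proper by blast
  ultimately show ?thesis
    using card_Union_prefix_perms_short_chain[of "{0..<n}" xs] by simp
qed

lemma prefix_perms_components_disjoint:
  assumes "S1 \<in> R" and "S2 \<in> R" and "component S1 \<noteq> component S2"
  shows "(\<Union>T\<in>component S1. prefix_perms A T) \<inter> (\<Union>T\<in>component S2. prefix_perms A T) = {}"
proof (rule ccontr)
  assume "\<not> ?thesis"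
  then obtain \<sigma> T1 T2 where T: "T1 \<in> component S1" "T2 \<in> component S2"
      "\<sigma> \<in> prefix_perms A T1" "\<sigma> \<in> prefix_perms A T2"
    by blast
  have "T1 \<in> R" and "T2 \<in> component T1"
    using T prefix_perms_comparable[OF T(3,4)] by (auto simp: component_def)
  then have "component T2 = component T1"
    by (rule component_eq)
  moreover have "component T1 = component S1" and "component T2 = component S2"
    using component_eq[OF assms(1) T(1)] component_eq[OF assms(2) T(2)] by simp_all
  ultimately show False
    using assms(3) by simp
qed

lemma card_le_central_binomial: "11 * card R \<le> 18 * (n choose (n div 2))"
proof -
  let ?F = "\<lambda>K. \<Union>T\<in>K. prefix_perms {0..<n} T"
  have "\<Union>(component ` R) = R"
    by (auto simp: component_def)
  moreover have "11 * central_fact_prod n * card (\<Union>(component ` R))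
      \<le> 18 * card (permutations_of_set {0..<n})"
  proof (rule card_Union_le_by_disjoint_images)
    show "finite (\<Union>(component ` R))"
      using transversal_finite by (auto simp: component_def)
    show "pairwise disjnt (component ` R)"
    proof (rule pairwiseI)
      fix K1 K2 assume "K1 \<in> component ` R" and "K2 \<in> component ` R" and "K1 \<noteq> K2"
      then obtain S1 S2 where S: "S1 \<in> R" "S2 \<in> R" "K1 = component S1" "K2 = component S2"
        by blast
      show "disjnt K1 K2"
        unfolding disjnt_def
      proof (rule ccontr)
        assume "K1 \<inter> K2 \<noteq> {}"
        then obtain T where "T \<in> component S1" and "T \<in> component S2"
          using S by blast
        then have "component T = K1" and "component T = K2"
          using component_eq[of S1 T] component_eq[of S2 T] S by simp_all
        with \<open>K1 \<noteq> K2\<close> show False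
          by simp
      qed
    qed
    show "disjoint_family_on ?F (component ` R)"
      unfolding disjoint_family_on_def
    proof (intro ballI impI)
      fix K1 K2 assume "K1 \<in> component ` R" and "K2 \<in> component ` R" and "K1 \<noteq> K2"
      then obtain S1 S2 where "S1 \<in> R" "S2 \<in> R" "K1 = component S1" "K2 = component S2"
        by blast
      then show "?F K1 \<inter> ?F K2 = {}"
        using prefix_perms_components_disjoint \<open>K1 \<noteq> K2\<close> by simp
    qed
    show "\<forall>K\<in>component ` R. ?F K \<subseteq> permutations_of_set {0..<n}"
      by (auto simp: prefix_perms_def)
    show "\<forall>K\<in>component ` R. 11 * central_fact_prod n * card K \<le> 18 * card (?F K)"
      using card_component_le by (simp add: ac_simps)
  qed simp
  ultimately have "central_fact_prod n * (11 * card R) \<le> central_fact_prod n * (18 * (n choose (n div 2)))"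
    using fact_eq_central_fact_prod_mult_binomial[of n] by (simp add: ac_simps)
  moreover have "0 < central_fact_prod n"
    by (simp add: central_fact_prod_def)
  ultimately show ?thesis
    by simp
qed

end

theorem proposition2p14:
  fixes n k :: nat and c :: "nat set \<Rightarrow> nat"
  assumes "n > 2" and "k \<ge> 4"
    and "exact_coloring n k c"
    and "\<not> has_rainbow_B2 n c"
  shows "k \<le> (n choose (n div 2)) + ((n - 1) choose ((n - 1) div 2))
              + ((n - 2) choose ((n - 2) div 2)) + 1"
proof -
  let ?C = "n choose (n div 2)" and ?A = "(n - 1) choose ((n - 1) div 2)"
    and ?B = "(n - 2) choose ((n - 2) div 2)"
  let ?I = "{1..k} - {c {}, c {0..<n}}"
  have ends: "c {} \<in> {1..k}" "c {0..<n} \<in> {1..k}"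
    using assms(3) by (auto simp: exact_coloring_def)
  obtain R where "R \<subseteq> Pow {0..<n}" and R: "bij_betw c R ?I"
    using exact_coloring_transversal[OF assms(3), of ?I] by blast
  then interpret rainbow_free_transversal n c R
    using assms(4) by unfold_locales (auto simp: bij_betw_def)
  have card_R: "card R = card ?I"
    using R by (rule bij_betw_same_card)
  show ?thesis
  proof (cases "c {} = c {0..<n}")
    case True
    then have "11 * (k - 1) \<le> 18 * ?C"
      using card_le_central_binomial card_R ends by simp
    moreover have "?C \<le> 2 * ?A"
      by (rule central_binomial_le_twice_pred)
    moreover have "?A \<le> 2 * ?B"
      using central_binomial_le_twice_pred[of "n - 1"] by (simp only: diff_diff_left one_add_one)
    ultimately show ?thesis
      by linarith
  next
    case False
    then have "k \<le> 5"
      using card_le_3_if_ends_differ card_R ends by (simp add: card_Diff_subset)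
    moreover have "n \<le> ?C" and "0 < ?A"
      using binomial_maximum[of n 1] by simp_all
    ultimately show ?thesis
      using assms(1) by linarith
  qed
qed

end
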